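(* Identify $\Gamma(Lev,\mathbb F x)$ with $\mathbb F[\mathrm{BHS}]$ via $u\mapsto\mathscr O_{\Sigma_n}(\underline u)\otimes x^{\otimes n}$ for $u\in\mathrm{BHS}(n)$, and let $1_{\mathscr L}=(1,0,0,\dots)\in\mathrm{BHS}(1)$ (corresponding to $1\otimes x$). Then for every $u\in\mathrm{BHS}(n)$, $$u=\phi_{\underline u,\,(u(0),u(1),\dots,u(o(u)))}(1_{\mathscr L},\dots,1_{\mathscr L})\quad(o(u)+1\text{ arguments}).$$ In particular $\mathbb F[\mathrm{BHS}]$ is generated as a $\Gamma(Lev)$-algebra by $1_{\mathscr L}$.
   Context: $[n]=\{1,\dots,n\}$. $\mathscr L'(n)$ ($n\ge1$): maps $h:[n]\to\mathbb N$ with $\sum_i2^{-h(i)}=1$, $\sigma\cdot h=h\circ\sigma^{-1}$; set operad with unit $1\mapsto0$ and full composition $\mu(h\otimes g_1\otimes\dots\otimes g_n)$ sending $m_1+\dots+m_{j-1}+t$ to $h(j)+g_j(t)$; $Lev=\mathbb F[\mathscr L']$. $\Gamma(Lev,V)=\bigoplus_n(Lev(n)\otimes V^{\otimes n})^{\Sigma_n}$ with Fresse's divided power monad multiplication $\tilde\mu$; $\Gamma(Lev,\mathbb F x)$ is the free $\Gamma(Lev)$-algebra on one generator. $\mathrm{BHS}(n)=\{u\in\mathbb N^{\mathbb N}:\sum_iu(i)=n,\ \sum_iu(i)2^{-i}=1\}$; $o(u)$ is the largest $j$ with $u(j)\ne0$; $\underline u\in\mathscr L'(n)$ sends the $j$-th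 consecutive interval (of length $u(j)$) to $j$; $\mathscr O_{\Sigma_n}(\underline u)=\sum_{y\in\Sigma_n\cdot\underline u}y$. Compositions ${\underline r}\in\mathrm{Comp}_p(n)$ are identified with partitions of $[n]$ into consecutive intervals, $\Sigma_{\underline r}$ the Young subgroup preserving them. For $h\in\mathscr L'(n)$ constant on each interval of ${\underline r}$ and $a_i\in\Gamma(Lev,\mathbb F x)$, $\phi_{h,{\underline r}}(a_1,\dots,a_p)=\tilde\mu\big(\sum_{\sigma\in\Sigma_n/\Sigma_{\underline r}}\sigma\cdot h\otimes\sigma\cdot(a_1^{\otimes r_1}\otimes\dots\otimes a_p^{\otimes r_p})\big)$. *)

theory Defs
  imports Complex_Main "HOL-Combinatorics.Permutations"
begin

text \<open>Conventions: the set [n] is modelled as the index set {0..<n}; an element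
  h of L'(n) is the list [h(1),...,h(n)] (0-based positions). Elements of the
  free F-module F[X] on a set X are finitely supported functions X => F.
  Gamma(Lev, F x) sits inside the direct sum of Lev(n) (x)^n = F[L'(n)], i.e. it is
  modelled by functions nat list => F (the basis element h (x) x^n is the
  indicator of h). Gamma(Lev)(n) (x) W^(x)n with W = Gamma(Lev,F x) sits inside
  F[L'(n) x (nat list)^n]; a pure tensor w_1 (x)...(x) w_n corresponds to the
  function (g_1,...,g_n) |-> prod_i w_i(g_i).\<close>

definition lev :: "nat \<Rightarrow> nat list set" where
  "lev n = {h. length h = n \<and> (\<Sum>i<n. (1/2::real) ^ (h ! i)) = 1}"

text \<open>Left action of a permutation on a list of length n: sigma.h = h o sigma^-1.
  Also used for the action of Sigma_n on W^(x)n by permuting tensor factors.\<close>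
definition perm_act :: "(nat \<Rightarrow> nat) \<Rightarrow> 'b list \<Rightarrow> 'b list" where
  "perm_act \<sigma> h = map (\<lambda>i. h ! inv \<sigma> i) [0..<length h]"

definition op_comp :: "nat list \<Rightarrow> nat list list \<Rightarrow> nat list" where
  "op_comp h gs = concat (map (\<lambda>j. map (\<lambda>t. h ! j + t) (gs ! j)) [0..<length h])"

definition interval :: "nat list \<Rightarrow> nat \<Rightarrow> nat set" where
  "interval r j = {sum_list (take j r) ..< sum_list (take (Suc j) r)}"

definition young :: "nat list \<Rightarrow> (nat \<Rightarrow> nat) set" where
  "young r = {\<tau>. \<tau> permutes {0..<sum_list r} \<and>
                 (\<forall>j<length r. \<tau> ` interval r j = interval r j)}"

definition cosets :: "nat list \<Rightarrow> (nat \<Rightarrow> nat) set set" where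
  "cosets r = {(\<lambda>\<tau>. \<sigma> \<circ> \<tau>) ` young r | \<sigma>. \<sigma> permutes {0..<sum_list r}}"

definition ptensor :: "(nat list \<Rightarrow> 'a::field) list \<Rightarrow> nat list list \<Rightarrow> 'a" where
  "ptensor ws gs = (if length gs = length ws
                    then (\<Prod>i<length ws. (ws ! i) (gs ! i)) else 0)"

definition blocks :: "nat list \<Rightarrow> 'b list \<Rightarrow> 'b list" where
  "blocks r as = concat (map (\<lambda>j. replicate (r ! j) (as ! j)) [0..<length r])"

text \<open>Divided power monad multiplication Gamma(Lev, Gamma(Lev, F x)) -> Gamma(Lev, F x),
  i.e. the restriction of the operadic composition to invariants.\<close>
definition gamma_mu :: "(nat list \<times> nat list list \<Rightarrow> 'a::field) \<Rightarrow> nat list \<Rightarrow> 'a" where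
  "gamma_mu \<Phi> k = (\<Sum>x\<in>{x. \<Phi> x \<noteq> 0 \<and> op_comp (fst x) (snd x) = k}. \<Phi> x)"

definition phi :: "nat list \<Rightarrow> nat list \<Rightarrow> (nat list \<Rightarrow> 'a::field) list \<Rightarrow> nat list \<Rightarrow> 'a" where
  "phi h r as = gamma_mu (\<lambda>x. \<Sum>C\<in>cosets r.
       (let \<sigma> = (SOME \<sigma>. \<sigma> \<in> C) in
        (if fst x = perm_act \<sigma> h then 1 else 0) * ptensor (perm_act \<sigma> (blocks r as)) (snd x)))"

definition bhs :: "nat \<Rightarrow> (nat \<Rightarrow> nat) set" where
  "bhs n = {u. finite {i. u i \<noteq> 0} \<and> (\<Sum>i\<in>{i. u i \<noteq> 0}. u i) = n \<and>
               (\<Sum>i\<in>{i. u i \<noteq> 0}. real (u i) * (1/2) ^ i) = 1}"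

definition ord :: "(nat \<Rightarrow> nat) \<Rightarrow> nat" where
  "ord u = (GREATEST j. u j \<noteq> 0)"

definition ul :: "(nat \<Rightarrow> nat) \<Rightarrow> nat list" where
  "ul u = concat (map (\<lambda>j. replicate (u j) j) [0..<Suc (ord u)])"

definition oneL :: "nat list \<Rightarrow> 'a::field" where
  "oneL k = (if k = [0] then 1 else 0)"

definition orbit_sum :: "nat \<Rightarrow> nat list \<Rightarrow> nat list \<Rightarrow> 'a::field" where
  "orbit_sum n h k = (if k \<in> {perm_act \<sigma> h | \<sigma>. \<sigma> permutes {0..<n}} then 1 else 0)"

end

theory Submission
  imports Defs
begin

text \<open>The Young subgroup of a composition r is the stabilizer of the list that labels
  each position by the index of its interval, so the cosets in the definition of phi are
  the fibers of the orbit map of that list. With all inputs equal to the unit, each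
  coset contributes a single basis tensor of the labelling moved by the coset, composed
  with units; the operadic unit law turns the sum into the sum of the orbit, which is
  exactly u.\<close>

definition stabilizer :: "'b list \<Rightarrow> (nat \<Rightarrow> nat) set" where
  "stabilizer h = {\<sigma>. \<sigma> permutes {0..<length h} \<and> perm_act \<sigma> h = h}"

definition perm_orbit :: "'b list \<Rightarrow> 'b list set" where
  "perm_orbit h = {perm_act \<sigma> h | \<sigma>. \<sigma> permutes {0..<length h}}"

definition perm_fiber :: "'b list \<Rightarrow> 'b list \<Rightarrow> (nat \<Rightarrow> nat) set" where
  "perm_fiber h k = {\<sigma>. \<sigma> permutes {0..<length h} \<and> perm_act \<sigma> h = k}"

lemma length_perm_act [simp]: "length (perm_act \<sigma> h) = length h"
  by (simp add: perm_act_def)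

lemma permutes_inv_less:
  fixes n :: nat
  assumes "\<sigma> permutes {0..<n}" and "i < n"
  shows "inv \<sigma> i < n"
  using permutes_in_image[OF permutes_inv[OF assms(1)], of i] assms(2) by simp

lemma perm_act_compose:
  assumes \<sigma>: "\<sigma> permutes {0..<length h}" and \<tau>: "\<tau> permutes {0..<length h}"
  shows "perm_act (\<sigma> \<circ> \<tau>) h = perm_act \<sigma> (perm_act \<tau> h)"
proof -
  have "inv (\<sigma> \<circ> \<tau>) = inv \<tau> \<circ> inv \<sigma>"
    using o_inv_distrib permutes_bij \<sigma> \<tau> by blast
  then show ?thesis
    using permutes_inv_less[OF \<sigma>] by (simp add: perm_act_def)
qed

lemma perm_act_eq_self_iff:
  assumes \<sigma>: "\<sigma> permutes {0..<length h}"
  shows "perm_act \<sigma> h = h \<longleftrightarrow> (\<forall>i<length h. h ! \<sigma> i = h ! i)"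
proof -
  have "perm_act \<sigma> h = h \<longleftrightarrow>
        map (\<lambda>i. h ! inv \<sigma> i) [0..<length h] = map (\<lambda>i. h ! i) [0..<length h]"
    by (simp add: perm_act_def map_nth)
  also have "\<dots> \<longleftrightarrow> (\<forall>i<length h. h ! inv \<sigma> i = h ! i)"
    by auto
  also have "\<dots> \<longleftrightarrow> (\<forall>i<length h. h ! \<sigma> i = h ! i)"
  proof (intro iffI allI impI)
    fix i assume inv_keeps: "\<forall>i<length h. h ! inv \<sigma> i = h ! i" and "i < length h"
    then have "\<sigma> i < length h" using permutes_in_image[OF \<sigma>] by simp
    then show "h ! \<sigma> i = h ! i"
      using inv_keeps[rule_format, of "\<sigma> i"] permutes_inverses(2)[OF \<sigma>] by simp
  next
    fix i assume keeps: "\<forall>i<length h. h ! \<sigma> i = h ! i" and "i < length h"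
    then have "inv \<sigma> i < length h" using permutes_inv_less[OF \<sigma>] by simp
    then show "h ! inv \<sigma> i = h ! i"
      using keeps[rule_format, of "inv \<sigma> i"] permutes_inverses(1)[OF \<sigma>] by simp
  qed
  finally show ?thesis .
qed

lemma perm_act_replicate:
  assumes "\<sigma> permutes {0..<n}"
  shows "perm_act \<sigma> (replicate n c) = replicate n c"
proof -
  have "map (\<lambda>i. replicate n c ! inv \<sigma> i) [0..<n] = map (\<lambda>i. c) [0..<n]"
    using permutes_inv_less[OF assms] by simp
  then show ?thesis by (simp add: perm_act_def map_replicate_const)
qed

lemma finite_perm_orbit: "finite (perm_orbit h)"
proof -
  have "perm_orbit h = (\<lambda>\<sigma>. perm_act \<sigma> h) ` {\<sigma>. \<sigma> permutes {0..<length h}}"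
    unfolding perm_orbit_def by blast
  then show ?thesis using finite_permutations[of "{0..<length h}"] by simp
qed

lemma some_in_perm_fiber:
  assumes "k \<in> perm_orbit h"
  shows "(SOME \<sigma>. \<sigma> \<in> perm_fiber h k) \<in> perm_fiber h k"
proof -
  obtain \<sigma> where "\<sigma> \<in> perm_fiber h k"
    using assms unfolding perm_orbit_def perm_fiber_def by blast
  then show ?thesis by (rule someI[where P = "\<lambda>\<sigma>. \<sigma> \<in> perm_fiber h k"])
qed

lemma length_perm_orbit: "k \<in> perm_orbit h \<Longrightarrow> length k = length h"
  by (auto simp: perm_orbit_def)

lemma inj_on_perm_fiber: "inj_on (perm_fiber h) (perm_orbit h)"
proof (rule inj_onI)
  fix k k' assume k: "k \<in> perm_orbit h" and eq: "perm_fiber h k = perm_fiber h k'"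
  from some_in_perm_fiber[OF k] eq show "k = k'"
    unfolding perm_fiber_def by auto
qed

lemma left_coset_stabilizer:
  assumes \<sigma>: "\<sigma> permutes {0..<length h}"
  shows "(\<lambda>\<tau>. \<sigma> \<circ> \<tau>) ` stabilizer h = perm_fiber h (perm_act \<sigma> h)"
proof
  show "(\<lambda>\<tau>. \<sigma> \<circ> \<tau>) ` stabilizer h \<subseteq> perm_fiber h (perm_act \<sigma> h)"
    using \<sigma> by (auto simp: stabilizer_def perm_fiber_def perm_act_compose permutes_compose)
next
  show "perm_fiber h (perm_act \<sigma> h) \<subseteq> (\<lambda>\<tau>. \<sigma> \<circ> \<tau>) ` stabilizer h"
  proof
    fix \<pi> assume "\<pi> \<in> perm_fiber h (perm_act \<sigma> h)"
    then have \<pi>: "\<pi> permutes {0..<length h}" and act: "perm_act \<pi> h = perm_act \<sigma> h"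
      by (auto simp: perm_fiber_def)
    have \<sigma>': "inv \<sigma> permutes {0..<length h}" using permutes_inv[OF \<sigma>] .
    have "perm_act (inv \<sigma> \<circ> \<pi>) h = perm_act (inv \<sigma> \<circ> \<sigma>) h"
      using perm_act_compose[OF \<sigma>' \<pi>] perm_act_compose[OF \<sigma>' \<sigma>] act by simp
    also have "\<dots> = h"
      using permutes_inv_o(2)[OF \<sigma>] by (simp add: perm_act_def map_nth)
    finally have "inv \<sigma> \<circ> \<pi> \<in> stabilizer h"
      using permutes_compose[OF \<pi> \<sigma>'] by (simp add: stabilizer_def)
    moreover have "\<pi> = \<sigma> \<circ> (inv \<sigma> \<circ> \<pi>)"
      using permutes_inv_o(1)[OF \<sigma>] by (simp add: o_assoc)
    ultimately show "\<pi> \<in> (\<lambda>\<tau>. \<sigma> \<circ> \<tau>) ` stabilizer h" by blast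
  qed
qed

lemma left_cosets_stabilizer:
  "{(\<lambda>\<tau>. \<sigma> \<circ> \<tau>) ` stabilizer h | \<sigma>. \<sigma> permutes {0..<length h}}
   = perm_fiber h ` perm_orbit h"
  unfolding perm_orbit_def using left_coset_stabilizer by blast

section \<open>The Young subgroup as a stabilizer\<close>

definition block_labels :: "nat list \<Rightarrow> nat list" where
  "block_labels r = concat (map (\<lambda>j. replicate (r ! j) j) [0..<length r])"

lemma block_labels_Nil [simp]: "block_labels [] = []"
  by (simp add: block_labels_def)

lemma block_labels_Cons:
  "block_labels (a # r) = replicate a 0 @ map Suc (block_labels r)"
proof -
  have "[0..<length (a # r)] = 0 # map Suc [0..<length r]"
    by (simp add: upt_conv_Cons map_Suc_upt del: upt_Suc)
  then show ?thesis by (simp add: block_labels_def map_concat o_def)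
qed

lemma length_block_labels [simp]: "length (block_labels r) = sum_list r"
  by (induction r) (auto simp: block_labels_Cons)

lemma block_labels_nth_Cons:
  "a \<le> j \<Longrightarrow> j < a + sum_list r \<Longrightarrow>
   block_labels (a # r) ! j = Suc (block_labels r ! (j - a))"
  by (simp add: block_labels_Cons nth_append)

lemma block_labels_nth_less:
  "j < sum_list r \<Longrightarrow> block_labels r ! j < length r"
proof (induction r arbitrary: j)
  case (Cons a r)
  then show ?case
    by (cases "j < a") (auto simp: block_labels_Cons nth_append)
qed simp

lemma block_labels_nth_eq_iff:
  "j < sum_list r \<Longrightarrow> k < length r \<Longrightarrow>
   block_labels r ! j = k \<longleftrightarrow> j \<in> interval r k"
proof (induction r arbitrary: j k)
  case (Cons a r)
  show ?case
  proof (cases "j < a")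
    case True
    then show ?thesis
      by (cases k) (auto simp: interval_def block_labels_Cons nth_append)
  next
    case False
    with Cons.prems show ?thesis
      by (cases k) (auto simp: block_labels_nth_Cons Cons.IH interval_def)
  qed
qed simp

lemma interval_subset: "interval r k \<subseteq> {0..<sum_list r}"
proof -
  have "sum_list (take (Suc k) r) \<le> sum_list r"
    by (metis append_take_drop_id le_add1 sum_list_append)
  then show ?thesis by (auto simp: interval_def)
qed

lemma interval_eq_block_fiber:
  assumes "k < length r"
  shows "interval r k = {i. i < sum_list r \<and> block_labels r ! i = k}"
proof (intro equalityI subsetI)
  fix i assume "i \<in> interval r k"
  moreover from this have "i < sum_list r" using interval_subset by fastforce
  ultimately show "i \<in> {i. i < sum_list r \<and> block_labels r ! i = k}"
    using block_labels_nth_eq_iff[OF _ assms] by simp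
qed (use block_labels_nth_eq_iff[OF _ assms] in blast)

lemma young_eq_stabilizer: "young r = stabilizer (block_labels r)"
proof -
  let ?N = "sum_list r" and ?l = "block_labels r"
  let ?fiber = "\<lambda>k. {i. i < ?N \<and> ?l ! i = k}"
  have fibers_iff:
    "(\<forall>k<length r. \<tau> ` ?fiber k = ?fiber k) \<longleftrightarrow> (\<forall>i<?N. ?l ! \<tau> i = ?l ! i)"
    if \<tau>: "\<tau> permutes {0..<?N}" for \<tau>
  proof
    assume fixes_fibers: "\<forall>k<length r. \<tau> ` ?fiber k = ?fiber k"
    show "\<forall>i<?N. ?l ! \<tau> i = ?l ! i"
    proof (intro allI impI)
      fix i assume i: "i < ?N"
      then have "\<tau> i \<in> \<tau> ` ?fiber (?l ! i)" by simp
      then show "?l ! \<tau> i = ?l ! i"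
        using fixes_fibers block_labels_nth_less[OF i] by auto
    qed
  next
    assume keeps_labels: "\<forall>i<?N. ?l ! \<tau> i = ?l ! i"
    show "\<forall>k<length r. \<tau> ` ?fiber k = ?fiber k"
    proof (intro allI impI equalityI subsetI)
      fix k j assume "j \<in> \<tau> ` ?fiber k"
      then show "j \<in> ?fiber k"
        using keeps_labels permutes_in_image[OF \<tau>] by auto
    next
      fix k j assume j: "j \<in> ?fiber k"
      have "inv \<tau> j < ?N" and \<tau>_inv: "\<tau> (inv \<tau> j) = j"
        using j permutes_inv_less[OF \<tau>] permutes_inverses(1)[OF \<tau>] by auto
      then have "inv \<tau> j \<in> ?fiber k"
        using j keeps_labels by force
      then show "j \<in> \<tau> ` ?fiber k"
        using \<tau>_inv by (metis image_eqI)
    qed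
  qed
  have "\<tau> \<in> young r \<longleftrightarrow> \<tau> \<in> stabilizer ?l" for \<tau>
  proof (cases "\<tau> permutes {0..<?N}")
    case True
    then show ?thesis
      using fibers_iff[OF True] perm_act_eq_self_iff[of \<tau> ?l] interval_eq_block_fiber
      by (simp add: young_def stabilizer_def)
  qed (simp add: young_def stabilizer_def)
  then show ?thesis by blast
qed

lemma cosets_eq_perm_fibers:
  "cosets r = perm_fiber (block_labels r) ` perm_orbit (block_labels r)"
  using left_cosets_stabilizer[of "block_labels r"]
  by (simp add: cosets_def young_eq_stabilizer)

lemma blocks_replicate:
  "blocks r (replicate (length r) c) = replicate (sum_list r) c"
proof (rule replicate_eqI)
  show "length (blocks r (replicate (length r) c)) = sum_list r"
    unfolding blocks_def by (simp add: length_concat o_def map_nth)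
qed (auto simp: blocks_def)

lemma ptensor_replicate_oneL:
  "ptensor (replicate n (oneL :: nat list \<Rightarrow> 'a::field)) gs
   = (if gs = replicate n [0] then 1 else 0)"
proof (cases "length gs = n")
  case len: True
  show ?thesis
  proof (cases "gs = replicate n [0]")
    case True
    then show ?thesis by (simp add: ptensor_def oneL_def)
  next
    case False
    then obtain i where i: "i < n" "gs ! i \<noteq> [0]"
      using len by (metis in_set_conv_nth replicate_eqI)
    then have "(\<Prod>i<n. (replicate n (oneL :: nat list \<Rightarrow> 'a) ! i) (gs ! i)) = 0"
      by (intro prod_zero) (auto simp: oneL_def)
    with len False show ?thesis by (simp add: ptensor_def)
  qed
qed (auto simp: ptensor_def)

lemma op_comp_units: "op_comp k (replicate (length k) [0]) = k"
proof -
  have "op_comp k (replicate (length k) [0]) = concat (map (\<lambda>j. [k ! j]) [0..<length k])"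
    unfolding op_comp_def by (intro arg_cong[where f = concat] map_cong) auto
  also have "\<dots> = k"
    by (simp add: map_nth flip: map_concat[of "\<lambda>j. [k ! j]", unfolded concat_map_singleton])
  finally show ?thesis .
qed

lemma gamma_mu_units:
  assumes "\<And>a. a \<in> A \<Longrightarrow> length a = n"
  shows "gamma_mu (\<lambda>x. if fst x \<in> A \<and> snd x = replicate n [0] then 1 else (0::'a::field)) k
         = (if k \<in> A then 1 else 0)"
proof -
  have "{x. (if fst x \<in> A \<and> snd x = replicate n [0] then 1 else (0::'a)) \<noteq> 0
            \<and> op_comp (fst x) (snd x) = k}
        = (if k \<in> A then {(k, replicate n [0])} else {})"
  proof -
    have "op_comp a (replicate n [0]) = a" if "a \<in> A" for a
      using op_comp_units[of a] assms[OF that] by simp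
    then show ?thesis by (auto split: if_splits)
  qed
  then show ?thesis by (simp add: gamma_mu_def)
qed

lemma phi_block_labels_units:
  "phi (block_labels r) r (replicate (length r) (oneL :: nat list \<Rightarrow> 'a::field))
   = (\<lambda>k. if k \<in> perm_orbit (block_labels r) then 1 else 0)"
proof
  fix k
  let ?l = "block_labels r" and ?Z = "replicate (sum_list r) [0::nat]"
  txt \<open>Whichever representative SOME picks in the coset, it moves the labelling
    to k' and fixes the tensor power of the unit.\<close>
  have coset_term: "(let \<sigma> = (SOME \<sigma>. \<sigma> \<in> perm_fiber ?l k') in
         (if fst x = perm_act \<sigma> ?l then 1 else 0) *
         ptensor (perm_act \<sigma> (blocks r (replicate (length r) (oneL :: nat list \<Rightarrow> 'a)))) (snd x))
        = (if fst x = k' then 1 else 0) * (if snd x = ?Z then 1 else 0)"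
    if "k' \<in> perm_orbit ?l" for k' x
    using some_in_perm_fiber[OF that]
    by (simp add: Let_def perm_fiber_def blocks_replicate perm_act_replicate
        ptensor_replicate_oneL)
  have coset_sum: "(\<lambda>x. \<Sum>C\<in>cosets r.
           (let \<sigma> = (SOME \<sigma>. \<sigma> \<in> C) in
            (if fst x = perm_act \<sigma> ?l then 1 else 0) *
            ptensor (perm_act \<sigma> (blocks r (replicate (length r) (oneL :: nat list \<Rightarrow> 'a)))) (snd x)))
        = (\<lambda>x. if fst x \<in> perm_orbit ?l \<and> snd x = ?Z then 1 else 0)"
    unfolding cosets_eq_perm_fibers sum.reindex[OF inj_on_perm_fiber, unfolded o_def]
    using finite_perm_orbit[of ?l]
    by (simp add: coset_term sum_distrib_right[symmetric] sum.delta' cong: sum.cong)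
      (simp add: fun_eq_iff)
  show "phi ?l r (replicate (length r) (oneL :: nat list \<Rightarrow> 'a)) k
        = (if k \<in> perm_orbit ?l then 1 else 0)"
    unfolding phi_def coset_sum by (rule gamma_mu_units) (simp add: length_perm_orbit)
qed

lemma ul_eq_block_labels: "ul u = block_labels (map u [0..<Suc (ord u)])"
  unfolding ul_def block_labels_def
  by (intro arg_cong[where f = concat] map_cong) (auto simp del: upt_Suc)

lemma bhs_sum_list:
  assumes "u \<in> bhs n"
  shows "sum_list (map u [0..<Suc (ord u)]) = n"
proof -
  let ?S = "{i. u i \<noteq> 0}"
  have fin: "finite ?S" and sum_S: "(\<Sum>i\<in>?S. u i) = n"
    using assms unfolding bhs_def by auto
  have "i \<le> ord u" if "i \<in> ?S" for i
    unfolding ord_def using that fin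
    by (intro Greatest_le_nat[of "\<lambda>j. u j \<noteq> 0" i "Max ?S"]) auto
  then have "?S \<subseteq> {0..<Suc (ord u)}" by fastforce
  then have "(\<Sum>i\<in>?S. u i) = (\<Sum>i\<in>{0..<Suc (ord u)}. u i)"
    by (intro sum.mono_neutral_left) auto
  also have "\<dots> = sum_list (map u [0..<Suc (ord u)])"
    by (simp only: sum_set_upt_conv_sum_list_nat[symmetric] set_upt)
  finally show ?thesis using sum_S by simp
qed

theorem lemma6p11:
  fixes u :: "nat \<Rightarrow> nat" and n :: nat
  assumes "u \<in> bhs n"
  shows "phi (ul u) (map u [0..<Suc (ord u)])
             (replicate (Suc (ord u)) (oneL :: nat list \<Rightarrow> 'a::field))
         = orbit_sum n (ul u)"
proof -
  let ?r = "map u [0..<Suc (ord u)]"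
  have "phi (block_labels ?r) ?r (replicate (length ?r) (oneL :: nat list \<Rightarrow> 'a))
        = orbit_sum (sum_list ?r) (block_labels ?r)"
    unfolding phi_block_labels_units orbit_sum_def perm_orbit_def by simp
  then show ?thesis
    by (simp add: ul_eq_block_labels bhs_sum_list[OF assms] del: upt_Suc)
qed

end
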